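(* Let $\alpha>1$, $\mathcal{D}_\alpha\in\{\mathcal{F}_\alpha,\mathcal{P}_\alpha\}$, $\mathcal{B}\subseteq[d]$, $i\in\mathcal{B}$, $j\in\mathcal{B}\setminus\{i\}$, $\lambda\in[0,\infty)^d$, and an integer $\tilde m\ge2$. If $\tilde m<|\mathcal{B}|$, then $$\frac{J_i(\lambda;\mathcal{D}_\alpha,\tilde m,\mathcal{B})}{\phi_i(\lambda;\mathcal{D}_\alpha,\tilde m,\mathcal{B})}\le\frac{J_i(\lambda;\mathcal{D}_\alpha,\tilde m-1,\mathcal{B}\setminus\{j\})}{\phi_i(\lambda;\mathcal{D}_\alpha,\tilde m-1,\mathcal{B}\setminus\{j\})}\vee\frac{J_i(\lambda;\mathcal{D}_\alpha,\tilde m,\mathcal{B}\setminus\{j\})}{\phi_i(\lambda;\mathcal{D}_\alpha,\tilde m,\mathcal{B}\setminus\{j\})}.$$ If $\tilde m=|\mathcal{B}|$, then $$\frac{J_i(\lambda;\mathcal{D}_\alpha,\tilde m,\mathcal{B})}{\phi_i(\lambda;\mathcal{D}_\alpha,\tilde m,\mathcal{B})}\le\frac{J_i(\lambda;\mathcal{D}_\alpha,\tilde m-1,\mathcal{B}\setminus\{j\})}{\phi_i(\lambda;\mathcal{D}_\alpha,\tilde m-1,\mathcal{B}\setminus\{j\})}.$$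
   Context: $u\vee v=\max(u,v)$. Fréchet $\mathcal{F}_\alpha$: CDF $F(x)=e^{-1/x^\alpha}$, density $f(x)=\alpha x^{-(\alpha+1)}e^{-1/x^\alpha}$, $x\ge0$, left endpoint $\nu=0$; Pareto $\mathcal{P}_\alpha$: $F(x)=1-x^{-\alpha}$, $f(x)=\alpha x^{-(\alpha+1)}$, $x\ge1$, $\nu=1$. For $\mathcal{B}\subseteq[d]$, $i\in\mathcal{B}$, $u\in\mathbb{R}^d$, $\mathrm{rank}(i,u;\mathcal{B})$ is the rank of $u_i$ among $\{u_k:k\in\mathcal{B}\}$ in descending order. For $\mathcal{D}\in\{\mathcal{F}_\alpha,\mathcal{P}_\alpha\}$ with CDF $F$, density $f$, left endpoint $\nu$, $\lambda\in[0,\infty)^d$, integer $\theta\ge1$: $$\phi_{i,\theta}(\lambda;\mathcal{D},\mathcal{B})=\int_{\nu-\lambda_i}^\infty\sum_{S\subseteq\mathcal{B}\setminus\{i\},|S|=\theta-1}\prod_{k\in S}(1-F(z+\lambda_k))\prod_{k\in\mathcal{B}\setminus(S\cup\{i\})}F(z+\lambda_k)\,f(z+\lambda_i)\,dz$$ (equal to $\mathbb{P}[\mathrm{rank}(i,r-\lambda;\mathcal{B})=\theta]$ for $r$ with i.i.d. coordinates from $\mathcal{D}$; empty sum $=0$), and $J_{i,\theta}(\lambda;\mathcal{D},\mathcal{B})$ is the same integral with the extra factor $\frac1{z+\lambda_i}$ in the integrand. $\phi_i(\lambda;\mathcal{D},\tilde m,\mathcal{B})=\sum_{\theta=1}^{\tilde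 m}\phi_{i,\theta}(\lambda;\mathcal{D},\mathcal{B})$ and $J_i(\lambda;\mathcal{D},\tilde m,\mathcal{B})=\sum_{\theta=1}^{\tilde m}J_{i,\theta}(\lambda;\mathcal{D},\mathcal{B})$. *)

theory Defs
  imports "HOL-Analysis.Analysis"
begin

datatype distr = Frechet | Pareto

definition cdf_D :: "distr \<Rightarrow> real \<Rightarrow> real \<Rightarrow> real" where
  "cdf_D D a x = (case D of
      Frechet \<Rightarrow> (if x \<le> 0 then 0 else exp (- (1 / x powr a)))
    | Pareto \<Rightarrow> (if x < 1 then 0 else 1 - x powr (- a)))"

definition pdf_D :: "distr \<Rightarrow> real \<Rightarrow> real \<Rightarrow> real" where
  "pdf_D D a x = (case D of
      Frechet \<Rightarrow> (if x \<le> 0 then 0 else a * x powr (-(a + 1)) * exp (- (1 / x powr a)))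
    | Pareto \<Rightarrow> (if x < 1 then 0 else a * x powr (-(a + 1))))"

definition nu_D :: "distr \<Rightarrow> real" where
  "nu_D D = (case D of Frechet \<Rightarrow> 0 | Pareto \<Rightarrow> 1)"

definition rank_kernel ::
  "distr \<Rightarrow> real \<Rightarrow> (nat \<Rightarrow> real) \<Rightarrow> nat set \<Rightarrow> nat \<Rightarrow> nat \<Rightarrow> real \<Rightarrow> real" where
  "rank_kernel D a lam B i th z =
     (\<Sum>S\<in>{S. S \<subseteq> B - {i} \<and> card S = th - 1}.
        (\<Prod>k\<in>S. 1 - cdf_D D a (z + lam k)) *
        (\<Prod>k\<in>B - (S \<union> {i}). cdf_D D a (z + lam k)))"

definition phi_it ::
  "distr \<Rightarrow> real \<Rightarrow> (nat \<Rightarrow> real) \<Rightarrow> nat set \<Rightarrow> nat \<Rightarrow> nat \<Rightarrow> real" where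
  "phi_it D a lam B i th =
     (LINT z:{nu_D D - lam i..}|lborel.
        rank_kernel D a lam B i th z * pdf_D D a (z + lam i))"

definition J_it ::
  "distr \<Rightarrow> real \<Rightarrow> (nat \<Rightarrow> real) \<Rightarrow> nat set \<Rightarrow> nat \<Rightarrow> nat \<Rightarrow> real" where
  "J_it D a lam B i th =
     (LINT z:{nu_D D - lam i..}|lborel.
        rank_kernel D a lam B i th z * pdf_D D a (z + lam i) / (z + lam i))"

definition phi_i ::
  "distr \<Rightarrow> real \<Rightarrow> (nat \<Rightarrow> real) \<Rightarrow> nat \<Rightarrow> nat set \<Rightarrow> nat \<Rightarrow> real" where
  "phi_i D a lam m B i = (\<Sum>th=1..m. phi_it D a lam B i th)"

definition J_i ::
  "distr \<Rightarrow> real \<Rightarrow> (nat \<Rightarrow> real) \<Rightarrow> nat \<Rightarrow> nat set \<Rightarrow> nat \<Rightarrow> real" where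
  "J_i D a lam m B i = (\<Sum>th=1..m. J_it D a lam B i th)"

end

theory Submission
  imports Defs
begin

(*
  Removing a competitor j from B splits the event "i has rank th in B" according to whether
  j lies below i (rank th in B - {j}, weight F(z + lam j)) or above it (rank th - 1 in
  B - {j}, weight 1 - F(z + lam j)). Summing over th <= m telescopes: the density of
  r_i - lam_i on "i is among the top m of B" is u + F(. + lam j) w, where u is the density
  for the top m - 1 of B - {j} and w the density of "rank exactly m in B - {j}"; for the
  top m of B - {j} it is u + w. phi_i and J_i integrate these densities against 1 and
  1/(z + lam i). As F(. + lam j) increases and 1/(z + lam i) decreases, Chebyshev's integral
  inequality bounds the J/phi ratio of F(. + lam j) w by that of w, and a mediant argument
  yields the maximum. If m = |B|, then w = 0.
*)

section \<open>Mediants and Chebyshev's integral inequality\<close>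

lemma mediant_le_max:
  fixes A W p q P Q :: real
  assumes W: "0 \<le> W" "W = 0 \<Longrightarrow> A = 0"
    and p: "0 \<le> p" "p \<le> P" and q: "0 \<le> q" "q \<le> Q" "P = 0 \<Longrightarrow> Q = 0"
    and slope: "q * P \<le> Q * p"
  shows "(A + q) / (W + p) \<le> max (A / W) ((A + Q) / (W + P))"
proof (cases "p = 0")
  case True
  then have "q = 0"
    using p q slope by (cases "P = 0") (auto simp: mult_le_0_iff)
  with True show ?thesis by simp
next
  case False
  then have "p > 0" "P > 0" using p by auto
  define b where "b = Q / P"
  have Q_eq: "Q = b * P" and q_le: "q \<le> b * p"
    using \<open>P > 0\<close> slope by (simp_all add: b_def field_simps)
  show ?thesis
  proof (cases "W = 0")
    case True
    then have "(A + q) / (W + p) \<le> b"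
      using W q_le \<open>p > 0\<close> by (simp add: divide_le_eq mult.commute)
    with True W show ?thesis by (simp add: b_def)
  next
    case False
    then have "W > 0" using W by simp
    show ?thesis
    proof (cases "b * W \<le> A")
      case True
      have "W * q \<le> W * (b * p)" using q_le \<open>W > 0\<close> by simp
      also have "\<dots> \<le> A * p" using mult_right_mono[OF True, of p] \<open>p > 0\<close> by (simp add: ac_simps)
      finally have "(A + q) / (W + p) \<le> A / W"
        using \<open>W > 0\<close> \<open>p > 0\<close> by (simp add: field_simps)
      then show ?thesis by simp
    next
      case False
      \<comment> \<open>(A + b * x) / (W + x) increases with x once b > A / W\<close>
      have "(A + q) * (W + P) \<le> (A + b * p) * (W + P)"
        using q_le \<open>W > 0\<close> \<open>P > 0\<close> by (intro mult_right_mono) auto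
      also have "\<dots> \<le> (A + b * P) * (W + p)"
        using mult_nonneg_nonneg[of "P - p" "b * W - A"] p False
        by (simp add: algebra_simps)
      finally have "(A + q) / (W + p) \<le> (A + Q) / (W + P)"
        using \<open>W > 0\<close> \<open>p > 0\<close> \<open>P > 0\<close> Q_eq by (simp add: field_simps)
      then show ?thesis by simp
    qed
  qed
qed

lemma integral_eq_0_if_support_null:
  fixes f g :: "'a \<Rightarrow> real"
  assumes "integrable M f" "\<And>x. 0 \<le> f x" "integral\<^sup>L M f = 0" "\<And>x. f x = 0 \<Longrightarrow> g x = 0"
  shows "integral\<^sup>L M g = 0"
proof -
  have "AE x in M. f x = 0"
    using integral_nonneg_eq_0_iff_AE[OF assms(1)] assms(2,3) by auto
  then have "AE x in M. g x = 0" using assms(4) by auto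
  then show ?thesis by (rule integral_eq_zero_AE)
qed

lemma chebyshev_integral_inverse_shift:
  fixes w h :: "real \<Rightarrow> real" and c :: real
  assumes int: "integrable M w" "integrable M (\<lambda>z. w z / (z + c))"
      "integrable M (\<lambda>z. h z * w z)" "integrable M (\<lambda>z. h z * w z / (z + c))"
    and w_nonneg: "\<And>z. 0 \<le> w z" and w_support: "\<And>z. w z \<noteq> 0 \<Longrightarrow> z + c > 0"
    and h_mono: "mono h"
  shows "(\<integral>z. h z * w z / (z + c) \<partial>M) * (\<integral>z. w z \<partial>M)
         \<le> (\<integral>z. w z / (z + c) \<partial>M) * (\<integral>z. h z * w z \<partial>M)"
    (is "?Ihq * ?Iw \<le> ?Iq * ?Ih")
proof -
  have q_nonneg: "0 \<le> w z / (z + c)" for z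
    using w_support[of z] w_nonneg[of z] by (cases "w z = 0") auto
  have Iw: "?Iw \<ge> 0" and Iq: "?Iq \<ge> 0"
    using w_nonneg q_nonneg by (auto intro: integral_nonneg_AE)
  show ?thesis
  proof (cases "?Iw = 0 \<or> ?Iq = 0")
    case True
    then have "?Ihq = 0"
    proof
      assume "?Iw = 0"
      then show ?thesis by (rule integral_eq_0_if_support_null[OF int(1) w_nonneg]) simp
    next
      assume "?Iq = 0"
      then show ?thesis by (rule integral_eq_0_if_support_null[OF int(2) q_nonneg]) simp
    qed
    moreover have "?Iq * ?Ih = 0" if "?Iw = 0"
      using integral_eq_0_if_support_null[OF int(1) w_nonneg that, of "\<lambda>z. h z * w z"]
      by simp
    ultimately show ?thesis using True by auto
  next
    case False
    then have "?Iw > 0" "?Iq > 0" using Iw Iq by auto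
    define mu where "mu = ?Iq / ?Iw"
    have "mu > 0" using \<open>?Iw > 0\<close> \<open>?Iq > 0\<close> by (simp add: mu_def)
    \<comment> \<open>mu is the w-average of 1/(z+c); 1/(z+c) - mu and h - h t have opposite signs\<close>
    define t where "t = 1 / mu - c"
    have pointwise: "(h z - h t) * (w z / (z + c) - mu * w z) \<le> 0" for z
    proof (cases "w z = 0")
      case False
      then have "z + c > 0" "w z > 0" using w_support w_nonneg[of z] by force+
      have eq: "w z / (z + c) - mu * w z = w z * (1 / (z + c) - mu)" by (simp add: field_simps)
      show ?thesis
      proof (cases "z \<le> t")
        case True
        then have "h z \<le> h t" "mu \<le> 1 / (z + c)"
          using h_mono \<open>z + c > 0\<close> \<open>mu > 0\<close> by (auto simp: mono_def t_def field_simps)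
        then show ?thesis unfolding eq using \<open>w z > 0\<close> by (intro mult_nonpos_nonneg) auto
      next
        case False
        then have "h t \<le> h z" "1 / (z + c) < mu"
          using h_mono \<open>z + c > 0\<close> \<open>mu > 0\<close> by (auto simp: mono_def t_def field_simps)
        then show ?thesis unfolding eq using \<open>w z > 0\<close> by (intro mult_nonneg_nonpos) auto
      qed
    qed simp
    have "(\<integral>z. (h z - h t) * (w z / (z + c) - mu * w z) \<partial>M)
        = (?Ihq - mu * ?Ih) - (h t * ?Iq - (h t * mu) * ?Iw)"
    proof -
      have "(\<lambda>z. (h z - h t) * (w z / (z + c) - mu * w z))
          = (\<lambda>z. (h z * w z / (z + c) - mu * (h z * w z)) - (h t * (w z / (z + c)) - (h t * mu) * w z))"
        by (rule ext) (simp add: algebra_simps diff_divide_distrib)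
      then show ?thesis
        by (simp only:) (intro has_bochner_integral_integral_eq has_bochner_integral_diff
            has_bochner_integral_mult_right has_bochner_integral_integrable int)
    qed
    moreover have "(\<integral>z. (h z - h t) * (w z / (z + c) - mu * w z) \<partial>M) \<le> 0"
      using integral_nonneg_AE[of "\<lambda>z. - ((h z - h t) * (w z / (z + c) - mu * w z))" M] pointwise
      by fastforce
    ultimately have "?Ihq \<le> mu * ?Ih" using \<open>?Iw > 0\<close> by (simp add: mu_def)
    then show ?thesis using \<open>?Iw > 0\<close> by (simp add: mu_def field_simps)
  qed
qed

lemma ratio_reweighted_le_max:
  fixes u w h :: "real \<Rightarrow> real" and c :: real
  assumes int_u: "integrable M u" "integrable M (\<lambda>z. u z / (z + c))"
    and int_w: "integrable M w" "integrable M (\<lambda>z. w z / (z + c))"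
    and int_hw: "integrable M (\<lambda>z. h z * w z)" "integrable M (\<lambda>z. h z * w z / (z + c))"
    and u_nonneg: "\<And>z. 0 \<le> u z" and u_support: "\<And>z. u z \<noteq> 0 \<Longrightarrow> z + c > 0"
    and w_nonneg: "\<And>z. 0 \<le> w z" and w_support: "\<And>z. w z \<noteq> 0 \<Longrightarrow> z + c > 0"
    and h: "mono h" "\<And>z. 0 \<le> h z" "\<And>z. h z \<le> 1"
  shows "(\<integral>z. (u z + h z * w z) / (z + c) \<partial>M) / (\<integral>z. u z + h z * w z \<partial>M)
      \<le> max ((\<integral>z. u z / (z + c) \<partial>M) / (\<integral>z. u z \<partial>M))
             ((\<integral>z. (u z + w z) / (z + c) \<partial>M) / (\<integral>z. u z + w z \<partial>M))"
proof -
  have u_div_nonneg: "0 \<le> u z / (z + c)" and w_div_nonneg: "0 \<le> w z / (z + c)" for z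
    using u_support[of z] u_nonneg[of z] w_support[of z] w_nonneg[of z]
    by (cases "u z = 0"; cases "w z = 0"; simp)+
  have sums: "(\<integral>z. u z + h z * w z \<partial>M) = (\<integral>z. u z \<partial>M) + (\<integral>z. h z * w z \<partial>M)"
    "(\<integral>z. u z + w z \<partial>M) = (\<integral>z. u z \<partial>M) + (\<integral>z. w z \<partial>M)"
    "(\<integral>z. (u z + h z * w z) / (z + c) \<partial>M) = (\<integral>z. u z / (z + c) \<partial>M) + (\<integral>z. h z * w z / (z + c) \<partial>M)"
    "(\<integral>z. (u z + w z) / (z + c) \<partial>M) = (\<integral>z. u z / (z + c) \<partial>M) + (\<integral>z. w z / (z + c) \<partial>M)"
    using int_u int_w int_hw by (simp_all add: add_divide_distrib)
  have null: "(\<integral>z. u z \<partial>M) = 0 \<Longrightarrow> (\<integral>z. u z / (z + c) \<partial>M) = 0"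
    "(\<integral>z. w z \<partial>M) = 0 \<Longrightarrow> (\<integral>z. w z / (z + c) \<partial>M) = 0"
    by (rule integral_eq_0_if_support_null[OF int_u(1) u_nonneg]
        integral_eq_0_if_support_null[OF int_w(1) w_nonneg]; simp)+
  have le: "(\<integral>z. h z * w z \<partial>M) \<le> (\<integral>z. w z \<partial>M)"
    "(\<integral>z. h z * w z / (z + c) \<partial>M) \<le> (\<integral>z. w z / (z + c) \<partial>M)"
    using int_w int_hw h(3) mult_right_mono[OF h(3) w_nonneg] mult_right_mono[OF h(3) w_div_nonneg]
    by (auto intro!: integral_mono)
  have nonneg: "0 \<le> (\<integral>z. h z * w z \<partial>M)" "0 \<le> (\<integral>z. h z * w z / (z + c) \<partial>M)"
    "0 \<le> (\<integral>z. u z \<partial>M)"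
    using h(2) w_nonneg w_div_nonneg u_nonneg
    by (auto intro!: integral_nonneg_AE mult_nonneg_nonneg simp del: times_divide_eq_right
        simp: times_divide_eq_right[symmetric])
  show ?thesis
    unfolding sums
    by (intro mediant_le_max null le nonneg
        chebyshev_integral_inverse_shift[OF int_w int_hw w_nonneg w_support h(1)])
qed

section \<open>Frechet and Pareto densities\<close>

lemma cdf_D_nonneg: "0 \<le> a \<Longrightarrow> 0 \<le> cdf_D D a x"
  and cdf_D_le_1: "cdf_D D a x \<le> 1"
  using ge_one_powr_ge_zero[of x a] by (cases D; auto simp: cdf_D_def powr_minus field_simps)+

lemma cdf_D_mono:
  assumes "0 \<le> a" "x \<le> y"
  shows "cdf_D D a x \<le> cdf_D D a y"
proof (cases D)
  case Frechet
  have "1 / y powr a \<le> 1 / x powr a" if "x > 0"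
    using assms that by (intro divide_left_mono powr_mono2) auto
  then show ?thesis using Frechet assms by (auto simp: cdf_D_def)
next
  case Pareto
  have "y powr (-a) \<le> x powr (-a)" if "x \<ge> 1"
    using assms that by (intro powr_mono2') auto
  then show ?thesis using Pareto assms cdf_D_nonneg[of a D y] by (auto simp: cdf_D_def)
qed

lemma pdf_D_nonneg: "0 \<le> a \<Longrightarrow> 0 \<le> pdf_D D a x"
  by (cases D) (auto simp: pdf_D_def)

lemma pdf_D_nonzero_imp:
  assumes "pdf_D D a x \<noteq> 0"
  shows "0 < x" "nu_D D \<le> x"
  using assms by (cases D; auto simp: pdf_D_def nu_D_def split: if_splits)+

lemma pdf_D_div_nonneg: "0 \<le> a \<Longrightarrow> 0 \<le> pdf_D D a x / x"
  using pdf_D_nonzero_imp(1)[of D a x] pdf_D_nonneg[of a D x]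
  by (cases "pdf_D D a x = 0") auto

lemma cdf_D_measurable [measurable]: "cdf_D D a \<in> borel_measurable borel"
  by (cases D) (simp_all add: cdf_D_def[abs_def])

lemma pdf_D_measurable [measurable]: "pdf_D D a \<in> borel_measurable borel"
  by (cases D) (simp_all add: pdf_D_def[abs_def])

lemma exp_neg_mult_cube_le:
  fixes t :: real
  assumes "0 \<le> t"
  shows "exp (-t) * t ^ 3 \<le> 27"
proof -
  have "t / 3 \<le> exp (t / 3)"
    using exp_ge_add_one_self[of "t / 3"] by linarith
  then have "(t / 3) ^ 3 \<le> exp (t / 3) ^ 3"
    using assms by (intro power_mono) auto
  also have "\<dots> = exp t" by (simp add: exp_of_nat_mult[symmetric])
  finally show ?thesis by (simp add: exp_minus field_simps)
qed

lemma frechet_density_le_linear: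
  fixes a x :: real
  assumes "1 \<le> a" "0 < x" "x \<le> 1"
  shows "a * x powr (-(a + 1)) * exp (- (1 / x powr a)) \<le> 27 * a * x"
proof -
  define t where "t = 1 / x powr a"
  have "t > 0" using assms by (simp add: t_def)
  have "a * x powr (-(a + 1)) * exp (-t) \<le> a * x powr (-(a + 1)) * (27 / t ^ 3)"
    using exp_neg_mult_cube_le[of t] \<open>t > 0\<close> assms by (intro mult_left_mono) (auto simp: field_simps)
  also have "\<dots> = 27 * a * x powr (2 * a - 1)"
    using assms by (simp add: t_def power_divide powr_realpow[symmetric] powr_powr
        powr_add[symmetric] field_simps)
  also have "x powr (2 * a - 1) \<le> x powr 1"
    using assms by (intro powr_mono') auto
  finally show ?thesis using assms by (simp add: t_def)
qed

lemma pdf_D_le_linear: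
  assumes "1 \<le> a" "0 < x" "x \<le> 1"
  shows "pdf_D D a x \<le> 27 * a * x"
  using frechet_density_le_linear[OF assms] assms
  by (cases D) (auto simp: pdf_D_def)

lemma pdf_D_le_inverse_square:
  assumes "1 \<le> a" "1 < x"
  shows "pdf_D D a x \<le> a / x ^ 2"
proof -
  have "pdf_D D a x \<le> a * x powr (-(a + 1))"
    using assms by (cases D) (auto simp: pdf_D_def mult_left_le)
  also have "x powr (-(a + 1)) \<le> x powr (-2)"
    using assms by (intro powr_mono) auto
  finally show ?thesis
    using assms by (simp add: powr_minus divide_inverse mult_left_mono)
qed

definition density_envelope :: "real \<Rightarrow> real" where
  "density_envelope x = (if x \<le> 0 then 0 else if x \<le> 1 then 1 else 1 / x ^ 2)"

lemma density_envelope_nonneg: "0 \<le> density_envelope x"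
  by (simp add: density_envelope_def)

lemma pdf_D_le_envelope:
  assumes "1 \<le> a"
  shows "pdf_D D a x \<le> 27 * a * density_envelope x"
    and "pdf_D D a x / x \<le> 27 * a * density_envelope x"
proof -
  have "pdf_D D a x \<le> 27 * a * density_envelope x \<and> pdf_D D a x / x \<le> 27 * a * density_envelope x"
  proof (cases "x \<le> 0")
    case True
    then have "pdf_D D a x = 0" using pdf_D_nonzero_imp(1) by fastforce
    with True show ?thesis by (simp add: density_envelope_def)
  next
    case False
    show ?thesis
    proof (cases "x \<le> 1")
      case True
      with False assms pdf_D_le_linear[OF assms, of x D] show ?thesis
        by (auto simp: density_envelope_def divide_le_eq mult.commute intro: order_trans)
    next
      case False
      have "pdf_D D a x / x \<le> pdf_D D a x"
        using False pdf_D_nonneg[of a D x] assms by (simp add: divide_le_eq mult_le_cancel_left1)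
      moreover have "a / x ^ 2 \<le> 27 * a / x ^ 2"
        using assms by (simp add: divide_right_mono)
      ultimately show ?thesis
        using False pdf_D_le_inverse_square[OF assms, of x D] by (auto simp: density_envelope_def)
    qed
  qed
  then show "pdf_D D a x \<le> 27 * a * density_envelope x" "pdf_D D a x / x \<le> 27 * a * density_envelope x"
    by auto
qed

lemma integrable_density_envelope: "integrable lborel density_envelope"
proof (rule Bochner_Integration.integrable_bound)
  have "(\<lambda>x::real. 1 / x ^ 2) absolutely_integrable_on {1..}"
    using has_integral_inverse_power_to_inf[of 2 1]
    by (intro nonnegative_absolutely_integrable_1) (auto simp: integrable_on_def)
  then have "integrable lborel (\<lambda>x::real. indicator {1..} x * (1 / x ^ 2))"
    by (simp add: set_integrable_def integrable_completion)
  then show "integrable lborel (\<lambda>x::real. indicator {0..1} x + indicator {1..} x * (1 / x ^ 2))"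
    by (intro Bochner_Integration.integrable_add) auto
  show "AE x in lborel. norm (density_envelope x)
      \<le> norm (indicator {0..1} x + indicator {1..} x * (1 / (x::real) ^ 2))"
    by (auto simp: density_envelope_def indicator_def)
qed (simp add: density_envelope_def[abs_def])

lemma integrable_bounded_times_pdf_D:
  assumes a: "1 \<le> a" and X: "X \<in> borel_measurable borel" "\<And>z. \<bar>X z\<bar> \<le> C"
  shows "integrable lborel (\<lambda>z. X z * pdf_D D a (z + c))"
    and "integrable lborel (\<lambda>z. X z * pdf_D D a (z + c) / (z + c))"
proof -
  have int_env: "integrable lborel (\<lambda>z. C * (27 * a * density_envelope (z + c)))"
    using lborel_integrable_real_affine[OF integrable_density_envelope, of 1 c]
    by (simp add: add.commute)
  have "0 \<le> C" using X(2)[of 0] by linarith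
  have env: "norm (C * (27 * a * density_envelope (z + c))) = C * (27 * a * density_envelope (z + c))" for z
    using \<open>0 \<le> C\<close> a density_envelope_nonneg[of "z + c"] by simp
  have "norm (X z * pdf_D D a (z + c)) \<le> norm (C * (27 * a * density_envelope (z + c)))" for z
  proof -
    have "\<bar>X z\<bar> * pdf_D D a (z + c) \<le> C * (27 * a * density_envelope (z + c))"
      using X(2)[of z] pdf_D_le_envelope(1)[OF a] \<open>0 \<le> C\<close> pdf_D_nonneg a
      by (intro mult_mono) auto
    then show ?thesis using pdf_D_nonneg[of a D "z + c"] a by (simp only: env) (simp add: abs_mult)
  qed
  then show "integrable lborel (\<lambda>z. X z * pdf_D D a (z + c))"
    by (intro Bochner_Integration.integrable_bound[OF int_env] AE_I2) (use X(1) in measurable)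
  have "norm (X z * (pdf_D D a (z + c) / (z + c))) \<le> norm (C * (27 * a * density_envelope (z + c)))" for z
  proof -
    have "\<bar>X z\<bar> * (pdf_D D a (z + c) / (z + c)) \<le> C * (27 * a * density_envelope (z + c))"
      using X(2)[of z] pdf_D_le_envelope(2)[OF a] \<open>0 \<le> C\<close> pdf_D_div_nonneg a
      by (intro mult_mono) auto
    moreover have "\<bar>pdf_D D a (z + c) / (z + c)\<bar> = pdf_D D a (z + c) / (z + c)"
      using pdf_D_div_nonneg[of a D "z + c"] a by (intro abs_of_nonneg) simp
    ultimately show ?thesis unfolding env by (simp only: real_norm_def abs_mult)
  qed
  then show "integrable lborel (\<lambda>z. X z * pdf_D D a (z + c) / (z + c))"
    unfolding times_divide_eq_right[symmetric]
    by (intro Bochner_Integration.integrable_bound[OF int_env] AE_I2) (use X(1) in measurable)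
qed

section \<open>Rank kernels\<close>

lemma rank_kernel_measurable [measurable]: "rank_kernel D a lam B i th \<in> borel_measurable borel"
  unfolding rank_kernel_def[abs_def] by measurable

lemma rank_kernel_nonneg: "0 \<le> a \<Longrightarrow> 0 \<le> rank_kernel D a lam B i th z"
  unfolding rank_kernel_def
  by (intro sum_nonneg mult_nonneg_nonneg prod_nonneg) (auto simp: cdf_D_nonneg cdf_D_le_1)

lemma rank_kernel_le_1:
  assumes "0 \<le> a" "finite B"
  shows "rank_kernel D a lam B i th z \<le> 1"
proof -
  define G where "G k = 1 - cdf_D D a (z + lam k)" for k
  define F where "F k = cdf_D D a (z + lam k)" for k
  have GF_nonneg: "0 \<le> G k" "0 \<le> F k" for k
    using assms by (simp_all add: G_def F_def cdf_D_nonneg cdf_D_le_1)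
  have "rank_kernel D a lam B i th z
      = (\<Sum>S\<in>{S. S \<subseteq> B - {i} \<and> card S = th - 1}. (\<Prod>k\<in>S. G k) * (\<Prod>k\<in>B - {i} - S. F k))"
    unfolding rank_kernel_def G_def F_def by (simp add: Diff_insert2[symmetric])
  also have "\<dots> \<le> (\<Sum>S\<in>Pow (B - {i}). (\<Prod>k\<in>S. G k) * (\<Prod>k\<in>B - {i} - S. F k))"
    using assms GF_nonneg by (intro sum_mono2 mult_nonneg_nonneg prod_nonneg) auto
  also have "\<dots> = (\<Prod>k\<in>B - {i}. G k + F k)"
    using assms by (simp add: prod_add)
  also have "\<dots> = 1" by (simp add: G_def F_def)
  finally show ?thesis .
qed

lemma rank_kernel_eq_0_if_card_less:
  assumes "finite B" "i \<in> B" "card B < th"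
  shows "rank_kernel D a lam B i th z = 0"
proof -
  have "0 < card B" using assms(1,2) card_gt_0_iff by blast
  have "card S \<noteq> th - 1" if "S \<subseteq> B - {i}" for S
  proof -
    have "card S \<le> card (B - {i})" using that assms(1) by (intro card_mono) auto
    also have "\<dots> < th - 1" using \<open>0 < card B\<close> assms(2,3) by simp
    finally show ?thesis by simp
  qed
  then have "{S. S \<subseteq> B - {i} \<and> card S = th - 1} = {}" by auto
  then show ?thesis unfolding rank_kernel_def by (simp only: sum.empty)
qed

lemma sum_subsets_card_Suc_insert:
  assumes "finite A" "j \<notin> A"
  shows "(\<Sum>S\<in>{S. S \<subseteq> insert j A \<and> card S = Suc n}. f S)
       = (\<Sum>S\<in>{S. S \<subseteq> A \<and> card S = Suc n}. f S) + (\<Sum>T\<in>{T. T \<subseteq> A \<and> card T = n}. f (insert j T))"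
proof -
  let ?U = "{S. S \<subseteq> A \<and> card S = Suc n}" and ?T = "{T. T \<subseteq> A \<and> card T = n}"
  have fin_subsets: "finite {S. S \<subseteq> A \<and> P S}" for P using assms(1) by simp
  have "{S. S \<subseteq> insert j A \<and> card S = Suc n} = ?U \<union> insert j ` ?T"
  proof (intro equalityI subsetI)
    fix S assume S: "S \<in> {S. S \<subseteq> insert j A \<and> card S = Suc n}"
    show "S \<in> ?U \<union> insert j ` ?T"
    proof (cases "j \<in> S")
      case True
      then have "S = insert j (S - {j})" "card (S - {j}) = n" "S - {j} \<subseteq> A"
        using S by auto
      then show ?thesis by blast
    next
      case False
      with S show ?thesis by (simp add: subset_insert)
    qed
  next
    fix S assume "S \<in> ?U \<union> insert j ` ?T"
    moreover have "card (insert j T) = Suc n" if "T \<in> ?T" for T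
    proof -
      have "finite T" "j \<notin> T" using that assms rev_finite_subset[OF assms(1)] by auto
      then show ?thesis using that by simp
    qed
    ultimately show "S \<in> {S. S \<subseteq> insert j A \<and> card S = Suc n}" by auto
  qed
  moreover have "inj_on (insert j) ?T"
  proof (rule inj_onI)
    fix T T' assume "T \<in> ?T" "T' \<in> ?T" "insert j T = insert j T'"
    moreover have "j \<notin> T" "j \<notin> T'" using \<open>T \<in> ?T\<close> \<open>T' \<in> ?T\<close> assms(2) by auto
    ultimately show "T = T'" by (simp add: insert_ident)
  qed
  moreover have "?U \<inter> insert j ` ?T = {}"
    using assms(2) by auto
  ultimately show ?thesis
    by (simp add: sum.union_disjoint fin_subsets sum.reindex)
qed

lemma rank_kernel_1:
  assumes "finite B"
  shows "rank_kernel D a lam B i 1 z = (\<Prod>k\<in>B - {i}. cdf_D D a (z + lam k))"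
proof -
  have "{S. S \<subseteq> B - {i} \<and> card S = 0} = {{}}"
    using assms by (auto dest: rev_finite_subset)
  then show ?thesis by (simp add: rank_kernel_def)
qed

lemma rank_kernel_Suc_Suc_remove:
  assumes "finite B" "i \<in> B" "j \<in> B" "j \<noteq> i"
  shows "rank_kernel D a lam B i (Suc (Suc n)) z
     = cdf_D D a (z + lam j) * rank_kernel D a lam (B - {j}) i (Suc (Suc n)) z
       + (1 - cdf_D D a (z + lam j)) * rank_kernel D a lam (B - {j}) i (Suc n) z"
proof -
  define G where "G k = 1 - cdf_D D a (z + lam k)" for k
  define F where "F k = cdf_D D a (z + lam k)" for k
  define A where "A = B - {j} - {i}"
  have "finite A" "j \<notin> A" "B - {i} = insert j A"
    using assms by (auto simp: A_def)
  have j_below: "(\<Prod>k\<in>B - (S \<union> {i}). F k) = F j * (\<Prod>k\<in>B - {j} - (S \<union> {i}). F k)"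
    if "S \<subseteq> A" for S
  proof -
    have "B - (S \<union> {i}) = insert j (B - {j} - (S \<union> {i}))" using that assms by (auto simp: A_def)
    then show ?thesis using assms(1) by simp
  qed
  have j_above: "(\<Prod>k\<in>insert j T. G k) * (\<Prod>k\<in>B - (insert j T \<union> {i}). F k)
      = G j * ((\<Prod>k\<in>T. G k) * (\<Prod>k\<in>B - {j} - (T \<union> {i}). F k))" if "T \<subseteq> A" for T
  proof -
    have "finite T" "j \<notin> T" using that \<open>finite A\<close> \<open>j \<notin> A\<close> rev_finite_subset by auto
    moreover have "B - (insert j T \<union> {i}) = B - {j} - (T \<union> {i})" by auto
    ultimately show ?thesis by simp
  qed
  have "rank_kernel D a lam B i (Suc (Suc n)) z
      = (\<Sum>S\<in>{S. S \<subseteq> A \<and> card S = Suc n}. (\<Prod>k\<in>S. G k) * (\<Prod>k\<in>B - (S \<union> {i}). F k))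
        + (\<Sum>T\<in>{T. T \<subseteq> A \<and> card T = n}.
             (\<Prod>k\<in>insert j T. G k) * (\<Prod>k\<in>B - (insert j T \<union> {i}). F k))"
    unfolding rank_kernel_def G_def F_def \<open>B - {i} = insert j A\<close>
    using sum_subsets_card_Suc_insert[OF \<open>finite A\<close> \<open>j \<notin> A\<close>] by simp
  also have "\<dots> = F j * rank_kernel D a lam (B - {j}) i (Suc (Suc n)) z
      + G j * rank_kernel D a lam (B - {j}) i (Suc n) z"
    unfolding rank_kernel_def sum_distrib_left A_def[symmetric] G_def[symmetric]
    unfolding F_def[symmetric]
    by (intro arg_cong2[where f = "(+)"] sum.cong refl)
      (auto simp del: Un_insert_left Un_insert_right simp: j_below j_above mult.left_commute)
  finally show ?thesis by (simp add: F_def G_def)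
qed

lemma sum_rank_kernel_remove:
  assumes "finite B" "i \<in> B" "j \<in> B" "j \<noteq> i" "1 \<le> m"
  shows "(\<Sum>th=1..m. rank_kernel D a lam B i th z)
     = (\<Sum>th=1..m-1. rank_kernel D a lam (B - {j}) i th z)
       + cdf_D D a (z + lam j) * rank_kernel D a lam (B - {j}) i m z"
  using assms(5)
proof (induction m rule: nat_induct_at_least)
  case base
  have "(\<Prod>k\<in>B - {i}. cdf_D D a (z + lam k))
      = cdf_D D a (z + lam j) * (\<Prod>k\<in>B - {j} - {i}. cdf_D D a (z + lam k))"
    using assms(1-4) prod.remove[of "B - {i}" j] by (simp add: Diff_insert2[symmetric] insert_commute)
  then show ?case
    using assms(1) rank_kernel_1[of B D a lam i z] rank_kernel_1[of "B - {j}" D a lam i z] by simp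
next
  case (Suc m)
  then obtain n where "m = Suc n" by (cases m) auto
  with Suc.IH show ?case
    using rank_kernel_Suc_Suc_remove[OF assms(1-4), of D a lam n z]
    by (simp add: algebra_simps)
qed

section \<open>The ratio of J_i to phi_i\<close>

definition rank_density :: "distr \<Rightarrow> real \<Rightarrow> (nat \<Rightarrow> real) \<Rightarrow> nat \<Rightarrow> nat set \<Rightarrow> nat \<Rightarrow> real \<Rightarrow> real"
  where "rank_density D a lam m B i z = (\<Sum>th=1..m. rank_kernel D a lam B i th z) * pdf_D D a (z + lam i)"

lemma rank_density_nonneg: "0 \<le> a \<Longrightarrow> 0 \<le> rank_density D a lam m B i z"
  unfolding rank_density_def by (intro mult_nonneg_nonneg sum_nonneg rank_kernel_nonneg pdf_D_nonneg)

lemma rank_density_nonzero_imp: "rank_density D a lam m B i z \<noteq> 0 \<Longrightarrow> 0 < z + lam i"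
  using pdf_D_nonzero_imp(1) by (force simp: rank_density_def)

lemma rank_density_last:
  "1 \<le> m \<Longrightarrow> rank_density D a lam m B i z
     = rank_density D a lam (m - 1) B i z + rank_kernel D a lam B i m z * pdf_D D a (z + lam i)"
  by (cases m) (simp_all add: rank_density_def distrib_right)

lemma rank_density_remove:
  assumes "finite B" "i \<in> B" "j \<in> B" "j \<noteq> i" "1 \<le> m"
  shows "rank_density D a lam m B i z = rank_density D a lam (m - 1) (B - {j}) i z
     + cdf_D D a (z + lam j) * (rank_kernel D a lam (B - {j}) i m z * pdf_D D a (z + lam i))"
  unfolding rank_density_def sum_rank_kernel_remove[OF assms] by (simp add: algebra_simps)

lemma integrable_rank_kernel_pdf_D:
  assumes "1 \<le> a" "finite B"
  shows "integrable lborel (\<lambda>z. rank_kernel D a lam B i th z * pdf_D D a (z + c))"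
    and "integrable lborel (\<lambda>z. rank_kernel D a lam B i th z * pdf_D D a (z + c) / (z + c))"
  using assms rank_kernel_nonneg[of a] rank_kernel_le_1[of a B]
  by (intro integrable_bounded_times_pdf_D[where C = 1]; simp add: abs_le_iff)+

lemma integrable_rank_density:
  assumes "1 \<le> a" "finite B"
  shows "integrable lborel (rank_density D a lam m B i)"
    and "integrable lborel (\<lambda>z. rank_density D a lam m B i z / (z + lam i))"
proof -
  have "\<bar>\<Sum>th=1..m. rank_kernel D a lam B i th z\<bar> \<le> real m" for z
  proof -
    have "(\<Sum>th=1..m. rank_kernel D a lam B i th z) \<le> (\<Sum>th=1..m. 1)"
      using assms rank_kernel_le_1[of a B] by (intro sum_mono) simp
    moreover have "0 \<le> (\<Sum>th=1..m. rank_kernel D a lam B i th z)"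
      using assms rank_kernel_nonneg[of a] by (intro sum_nonneg) simp
    ultimately show ?thesis by simp
  qed
  then show "integrable lborel (rank_density D a lam m B i)"
    and "integrable lborel (\<lambda>z. rank_density D a lam m B i z / (z + lam i))"
    unfolding rank_density_def[abs_def] using assms(1)
    by (intro integrable_bounded_times_pdf_D[where C = "real m"]; simp)+
qed

lemma set_integral_from_left_endpoint:
  assumes "\<And>z. f z \<noteq> 0 \<Longrightarrow> pdf_D D a (z + c) \<noteq> 0"
  shows "(LINT z:{nu_D D - c..}|lborel. f z) = (\<integral>z. f z \<partial>lborel)"
  unfolding set_lebesgue_integral_def
proof (rule Bochner_Integration.integral_cong)
  show "indicator {nu_D D - c..} z *\<^sub>R f z = f z" for z
    using assms[of z] pdf_D_nonzero_imp(2)[of D a "z + c"]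
    by (cases "f z = 0") (auto simp: indicator_def)
qed simp

lemma phi_i_eq_integral:
  assumes "1 \<le> a" "finite B"
  shows "phi_i D a lam m B i = (\<integral>z. rank_density D a lam m B i z \<partial>lborel)"
proof -
  have "phi_it D a lam B i th = (\<integral>z. rank_kernel D a lam B i th z * pdf_D D a (z + lam i) \<partial>lborel)" for th
    unfolding phi_it_def by (rule set_integral_from_left_endpoint) auto
  then show ?thesis
    unfolding phi_i_def rank_density_def sum_distrib_right
    using integrable_rank_kernel_pdf_D(1)[OF assms] by simp
qed

lemma J_i_eq_integral:
  assumes "1 \<le> a" "finite B"
  shows "J_i D a lam m B i = (\<integral>z. rank_density D a lam m B i z / (z + lam i) \<partial>lborel)"
proof -
  have "J_it D a lam B i th
      = (\<integral>z. rank_kernel D a lam B i th z * pdf_D D a (z + lam i) / (z + lam i) \<partial>lborel)" for th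
    unfolding J_it_def by (rule set_integral_from_left_endpoint) auto
  then show ?thesis
    unfolding J_i_def rank_density_def sum_distrib_right sum_divide_distrib
    using integrable_rank_kernel_pdf_D(2)[OF assms] by simp
qed

lemma J_i_div_phi_i_remove_le_max:
  assumes "1 \<le> a" "finite B" "i \<in> B" "j \<in> B" "j \<noteq> i" "1 \<le> m"
  shows "J_i D a lam m B i / phi_i D a lam m B i
      \<le> max (J_i D a lam (m - 1) (B - {j}) i / phi_i D a lam (m - 1) (B - {j}) i)
             (J_i D a lam m (B - {j}) i / phi_i D a lam m (B - {j}) i)"
proof -
  have a: "0 \<le> a" and fin: "finite (B - {j})" using assms(1,2) by auto
  define u where "u = rank_density D a lam (m - 1) (B - {j}) i"
  define w where "w z = rank_kernel D a lam (B - {j}) i m z * pdf_D D a (z + lam i)" for z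
  define h where "h z = cdf_D D a (z + lam j)" for z
  have density_B: "rank_density D a lam m B i = (\<lambda>z. u z + h z * w z)"
    using rank_density_remove[OF assms(2-6)] by (auto simp: u_def w_def h_def)
  have density_B': "rank_density D a lam m (B - {j}) i = (\<lambda>z. u z + w z)"
    using rank_density_last[OF assms(6)] by (auto simp: u_def w_def)
  show ?thesis
    unfolding J_i_eq_integral[OF assms(1,2)] phi_i_eq_integral[OF assms(1,2)]
      J_i_eq_integral[OF assms(1) fin] phi_i_eq_integral[OF assms(1) fin]
      density_B density_B' u_def[symmetric]
  proof (rule ratio_reweighted_le_max)
    show "integrable lborel u" "integrable lborel (\<lambda>z. u z / (z + lam i))"
      unfolding u_def by (rule integrable_rank_density[OF assms(1) fin])+
    show "integrable lborel w" "integrable lborel (\<lambda>z. w z / (z + lam i))"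
      unfolding w_def[abs_def] by (rule integrable_rank_kernel_pdf_D[OF assms(1) fin])+
    have "\<bar>h z * rank_kernel D a lam (B - {j}) i m z\<bar> \<le> 1" for z
      using a fin cdf_D_nonneg[of a D] cdf_D_le_1[of D a] rank_kernel_nonneg[of a] rank_kernel_le_1[of a]
      by (simp add: h_def abs_le_iff mult_le_one)
    then show "integrable lborel (\<lambda>z. h z * w z)" "integrable lborel (\<lambda>z. h z * w z / (z + lam i))"
      unfolding w_def mult.assoc[symmetric]
      by (intro integrable_bounded_times_pdf_D[OF assms(1), where C = 1]; simp add: h_def)+
    show "0 \<le> u z" "u z \<noteq> 0 \<Longrightarrow> 0 < z + lam i" for z
      using rank_density_nonneg[OF a] rank_density_nonzero_imp by (auto simp: u_def)
    show "0 \<le> w z" "w z \<noteq> 0 \<Longrightarrow> 0 < z + lam i" for z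
      using rank_kernel_nonneg[OF a] pdf_D_nonneg[OF a] pdf_D_nonzero_imp(1)
      by (force simp: w_def)+
    show "mono h" "0 \<le> h z" "h z \<le> 1" for z
      using a by (auto simp: h_def mono_def cdf_D_mono cdf_D_nonneg cdf_D_le_1)
  qed
qed

lemma rank_density_remove_top:
  assumes "finite B" "i \<in> B" "j \<in> B" "j \<noteq> i" "card B \<le> m"
  shows "rank_density D a lam m B i z = rank_density D a lam (m - 1) (B - {j}) i z"
proof -
  have "1 \<le> m" "card (B - {j}) < m"
    using assms card_gt_0_iff[of B] card_Diff1_less[OF assms(1,3)] by auto
  moreover have "finite (B - {j})" "i \<in> B - {j}" using assms by auto
  ultimately show ?thesis
    using rank_density_remove[OF assms(1-4)] rank_kernel_eq_0_if_card_less by simp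
qed

theorem lemma13:
  fixes D :: distr and a :: real and d :: nat and B :: "nat set"
    and i j m :: nat and lam :: "nat \<Rightarrow> real"
  assumes "a > 1"
    and "B \<subseteq> {1..d}" and "i \<in> B" and "j \<in> B" and "j \<noteq> i"
    and "\<forall>k\<in>{1..d}. lam k \<ge> 0"
    and "m \<ge> 2"
  shows "(m < card B \<longrightarrow>
           J_i D a lam m B i / phi_i D a lam m B i
             \<le> max (J_i D a lam (m - 1) (B - {j}) i / phi_i D a lam (m - 1) (B - {j}) i)
                    (J_i D a lam m (B - {j}) i / phi_i D a lam m (B - {j}) i))
       \<and> (m = card B \<longrightarrow>
           J_i D a lam m B i / phi_i D a lam m B i
             \<le> J_i D a lam (m - 1) (B - {j}) i / phi_i D a lam (m - 1) (B - {j}) i)"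
proof -
  have "1 \<le> a" "1 \<le> m" "finite B" using assms(1,7) finite_subset[OF assms(2)] by auto
  show ?thesis
    using J_i_div_phi_i_remove_le_max[OF \<open>1 \<le> a\<close> \<open>finite B\<close> assms(3-5) \<open>1 \<le> m\<close>]
      rank_density_remove_top[OF \<open>finite B\<close> assms(3-5)]
    by (simp add: J_i_eq_integral[OF \<open>1 \<le> a\<close>] phi_i_eq_integral[OF \<open>1 \<le> a\<close>] \<open>finite B\<close>)
qed

end
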